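(* If $C$ is a semiprime $k$-coalgebra with finite coradical filtration (i.e. $C=C_n$ for some $n$), then $C$ is cosemisimple (i.e. $C=\mathrm{Soc}\,C=C_0$). *)

theory Defs
  imports Main "HOL-Library.Groups_Big_Fun"
begin

text \<open>A k-coalgebra C is represented through a chosen basis indexed by the type 'b
  (every vector space has a basis).  Vectors of C are finitely supported functions
  'b \<Rightarrow> 'k, tensors in C \<otimes> C are finitely supported functions on 'b \<times> 'b.
  The structure constants delta b (x,y) give Delta(b) = sum delta b (x,y) x \<otimes> y,
  and eps b is the counit on basis vectors.\<close>

definition fin_supp :: "('a \<Rightarrow> 'k::zero) \<Rightarrow> bool" where
  "fin_supp v \<longleftrightarrow> finite {x. v x \<noteq> 0}"

definition Cspace :: "('a \<Rightarrow> 'k::zero) set" where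
  "Cspace = {v. fin_supp v}"

definition fspan :: "('a \<Rightarrow> 'k::field) set \<Rightarrow> ('a \<Rightarrow> 'k) set" where
  "fspan S = {v. \<exists>A c. finite A \<and> A \<subseteq> S \<and> v = (\<lambda>x. \<Sum>a\<in>A. c a * a x)}"

definition fsubspace :: "('a \<Rightarrow> 'k::field) set \<Rightarrow> bool" where
  "fsubspace D \<longleftrightarrow> D \<subseteq> Cspace \<and> (\<lambda>_. 0) \<in> D
     \<and> (\<forall>u\<in>D. \<forall>v\<in>D. (\<lambda>x. u x + v x) \<in> D)
     \<and> (\<forall>a. \<forall>v\<in>D. (\<lambda>x. a * v x) \<in> D)"

definition tprod :: "('b \<Rightarrow> 'k::field) \<Rightarrow> ('b \<Rightarrow> 'k) \<Rightarrow> ('b \<times> 'b \<Rightarrow> 'k)" where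
  "tprod u v = (\<lambda>(x, y). u x * v y)"

definition tens :: "('b \<Rightarrow> 'k::field) set \<Rightarrow> ('b \<Rightarrow> 'k) set \<Rightarrow> ('b \<times> 'b \<Rightarrow> 'k) set" where
  "tens D E = fspan {tprod d e | d e. d \<in> D \<and> e \<in> E}"

definition coalgebra :: "('b \<Rightarrow> 'b \<times> 'b \<Rightarrow> 'k::field) \<Rightarrow> ('b \<Rightarrow> 'k) \<Rightarrow> bool" where
  "coalgebra \<delta> \<epsilon> \<longleftrightarrow>
     (\<forall>b. fin_supp (\<delta> b))
   \<and> (\<forall>b u v w. Sum_any (\<lambda>x. \<delta> b (x, w) * \<delta> x (u, v)) = Sum_any (\<lambda>y. \<delta> b (u, y) * \<delta> y (v, w)))
   \<and> (\<forall>b u. Sum_any (\<lambda>x. \<epsilon> x * \<delta> b (x, u)) = (if u = b then 1 else 0))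
   \<and> (\<forall>b u. Sum_any (\<lambda>y. \<delta> b (u, y) * \<epsilon> y) = (if u = b then 1 else 0))"

definition Delta :: "('b \<Rightarrow> 'b \<times> 'b \<Rightarrow> 'k::field) \<Rightarrow> ('b \<Rightarrow> 'k) \<Rightarrow> ('b \<times> 'b \<Rightarrow> 'k)" where
  "Delta \<delta> v = (\<lambda>p. Sum_any (\<lambda>b. v b * \<delta> b p))"

definition subcoalgebra :: "('b \<Rightarrow> 'b \<times> 'b \<Rightarrow> 'k::field) \<Rightarrow> ('b \<Rightarrow> 'k) set \<Rightarrow> bool" where
  "subcoalgebra \<delta> D \<longleftrightarrow> fsubspace D \<and> (\<forall>v\<in>D. Delta \<delta> v \<in> tens D D)"

definition simple_subcoalgebra :: "('b \<Rightarrow> 'b \<times> 'b \<Rightarrow> 'k::field) \<Rightarrow> ('b \<Rightarrow> 'k) set \<Rightarrow> bool" where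
  "simple_subcoalgebra \<delta> D \<longleftrightarrow> subcoalgebra \<delta> D \<and> D \<noteq> {\<lambda>_. 0}
     \<and> (\<forall>E. subcoalgebra \<delta> E \<and> E \<subseteq> D \<longrightarrow> E = {\<lambda>_. 0} \<or> E = D)"

definition coradical :: "('b \<Rightarrow> 'b \<times> 'b \<Rightarrow> 'k::field) \<Rightarrow> ('b \<Rightarrow> 'k) set" where
  "coradical \<delta> = fspan (\<Union>{D. simple_subcoalgebra \<delta> D})"

definition wedge :: "('b \<Rightarrow> 'b \<times> 'b \<Rightarrow> 'k::field) \<Rightarrow> ('b \<Rightarrow> 'k) set \<Rightarrow> ('b \<Rightarrow> 'k) set \<Rightarrow> ('b \<Rightarrow> 'k) set" where
  "wedge \<delta> D E = {v \<in> Cspace. Delta \<delta> v \<in> fspan (tens D Cspace \<union> tens Cspace E)}"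

fun corad_filt :: "('b \<Rightarrow> 'b \<times> 'b \<Rightarrow> 'k::field) \<Rightarrow> nat \<Rightarrow> ('b \<Rightarrow> 'k) set" where
  "corad_filt \<delta> 0 = coradical \<delta>"
| "corad_filt \<delta> (Suc n) = wedge \<delta> (corad_filt \<delta> n) (coradical \<delta>)"

definition semiprime :: "('b \<Rightarrow> 'b \<times> 'b \<Rightarrow> 'k::field) \<Rightarrow> bool" where
  "semiprime \<delta> \<longleftrightarrow> (\<forall>D. subcoalgebra \<delta> D \<and> wedge \<delta> D D = Cspace \<longrightarrow> D = Cspace)"

definition cosemisimple :: "('b \<Rightarrow> 'b \<times> 'b \<Rightarrow> 'k::field) \<Rightarrow> bool" where
  "cosemisimple \<delta> \<longleftrightarrow> coradical \<delta> = Cspace"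

end

theory Submission
  imports Defs
begin

(* C_{n+1} = C_n \<and> C_0 is contained in C_n \<and> C_n, because C_0 \<subseteq> C_n and the
   wedge is monotone.  If every C_n is a subcoalgebra, then C_{n+1} = C forces
   C_n \<and> C_n = C, hence C_n = C by semiprimeness; descending induction from the given
   n then yields C_0 = C, i.e. C is cosemisimple.

   The substance lies in showing that the wedge of two subcoalgebras is again a
   subcoalgebra. *)

section \<open>Linear closure and finite spans\<close>

definition lclosed :: "('a \<Rightarrow> 'k::field) set \<Rightarrow> bool" where
  "lclosed V \<longleftrightarrow> (\<lambda>_. 0) \<in> V \<and> (\<forall>u\<in>V. \<forall>v\<in>V. (\<lambda>x. u x + v x) \<in> V)
     \<and> (\<forall>a. \<forall>v\<in>V. (\<lambda>x. a * v x) \<in> V)"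

lemma fsubspace_iff: "fsubspace D \<longleftrightarrow> D \<subseteq> Cspace \<and> lclosed D"
  unfolding fsubspace_def lclosed_def by blast

lemma Cspace_iff: "v \<in> Cspace \<longleftrightarrow> finite {x. v x \<noteq> 0}"
  unfolding Cspace_def fin_supp_def by simp

lemma lclosed_zero: "lclosed V \<Longrightarrow> (\<lambda>_. 0) \<in> V"
  and lclosed_add: "lclosed V \<Longrightarrow> u \<in> V \<Longrightarrow> v \<in> V \<Longrightarrow> (\<lambda>x. u x + v x) \<in> V"
  and lclosed_scale: "lclosed V \<Longrightarrow> v \<in> V \<Longrightarrow> (\<lambda>x. a * v x) \<in> V"
  unfolding lclosed_def by blast+

lemma lclosed_diff:
  assumes V: "lclosed V" and u: "u \<in> V" and v: "v \<in> V"
  shows "(\<lambda>x. u x - v x) \<in> V"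
  using lclosed_add[OF V u lclosed_scale[OF V v, of "-1"]] by simp

lemma lclosed_sum:
  assumes V: "lclosed V" and "finite I" and "\<And>i. i \<in> I \<Longrightarrow> f i \<in> V"
  shows "(\<lambda>x. \<Sum>i\<in>I. g i * f i x) \<in> V"
  using assms(2,3)
proof (induction I rule: finite_induct)
  case empty
  then show ?case using lclosed_zero[OF V] by simp
next
  case (insert i I)
  then show ?case
    using lclosed_add[OF V lclosed_scale[OF V, of "f i" "g i"]] by simp
qed

lemma lclosed_Cspace: "lclosed (Cspace :: ('a \<Rightarrow> 'k::field) set)"
proof -
  have "finite {x. u x + v x \<noteq> 0}" if "finite {x. u x \<noteq> 0}" "finite {x. v x \<noteq> 0}"
    for u v :: "'a \<Rightarrow> 'k"
    by (rule finite_subset[of _ "{x. u x \<noteq> 0} \<union> {x. v x \<noteq> 0}"]) (use that in auto)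
  moreover have "finite {x. a * v x \<noteq> 0}" if "finite {x. v x \<noteq> 0}" for a and v :: "'a \<Rightarrow> 'k"
    by (rule finite_subset[OF _ that]) auto
  ultimately show ?thesis unfolding lclosed_def Cspace_def fin_supp_def by simp
qed

lemma fspan_base: "s \<in> S \<Longrightarrow> s \<in> fspan S"
  unfolding fspan_def by (intro CollectI exI[of _ "{s}"] exI[of _ "\<lambda>_. 1"]) simp

lemma fspan_least:
  assumes V: "lclosed V" and S: "S \<subseteq> V"
  shows "fspan S \<subseteq> V"
proof
  fix v assume "v \<in> fspan S"
  then obtain A c where "finite A" "A \<subseteq> S" "v = (\<lambda>x. \<Sum>a\<in>A. c a * a x)"
    unfolding fspan_def by blast
  then show "v \<in> V" using lclosed_sum[OF V, of A "\<lambda>a. a" c] S by blast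
qed

lemma lclosed_fspan: "lclosed (fspan S)"
  unfolding lclosed_def
proof (intro conjI ballI allI)
  show "(\<lambda>_. 0) \<in> fspan S"
    unfolding fspan_def by (intro CollectI exI[of _ "{}"]) simp
next
  fix u v assume "u \<in> fspan S" "v \<in> fspan S"
  then obtain A c B d where A: "finite A" "A \<subseteq> S" "u = (\<lambda>x. \<Sum>a\<in>A. c a * a x)"
    and B: "finite B" "B \<subseteq> S" "v = (\<lambda>x. \<Sum>a\<in>B. d a * a x)"
    unfolding fspan_def by blast
  \<comment> \<open>extend both coefficient families by zero to the common index set A \<union> B\<close>
  define e where "e a = (if a \<in> A then c a else 0) + (if a \<in> B then d a else 0)" for a
  have "u x + v x = (\<Sum>a\<in>A \<union> B. e a * a x)" for x
  proof -
    have "(\<Sum>a\<in>A \<union> B. e a * a x) = (\<Sum>a\<in>A \<union> B. if a \<in> A then c a * a x else 0)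
        + (\<Sum>a\<in>A \<union> B. if a \<in> B then d a * a x else 0)"
      unfolding e_def sum.distrib[symmetric] by (rule sum.cong) (simp_all add: distrib_right)
    also have "\<dots> = (\<Sum>a\<in>(A \<union> B) \<inter> A. c a * a x) + (\<Sum>a\<in>(A \<union> B) \<inter> B. d a * a x)"
      using A(1) B(1) by (simp only: sum.inter_restrict finite_Un)
    also have "\<dots> = (\<Sum>a\<in>A. c a * a x) + (\<Sum>a\<in>B. d a * a x)"
      by (simp add: Int_absorb1)
    finally show ?thesis using A(3) B(3) by simp
  qed
  then have "(\<lambda>x. u x + v x) = (\<lambda>x. \<Sum>a\<in>A \<union> B. e a * a x)" by simp
  then show "(\<lambda>x. u x + v x) \<in> fspan S"
    unfolding fspan_def using A B by (intro CollectI exI[of _ "A \<union> B"] exI[of _ e]) simp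
next
  fix r v assume "v \<in> fspan S"
  then obtain A c where A: "finite A" "A \<subseteq> S" "v = (\<lambda>x. \<Sum>a\<in>A. c a * a x)"
    unfolding fspan_def by blast
  then have "(\<lambda>x. r * v x) = (\<lambda>x. \<Sum>a\<in>A. (r * c a) * a x)"
    by (simp add: sum_distrib_left mult.assoc)
  then show "(\<lambda>x. r * v x) \<in> fspan S"
    unfolding fspan_def using A by (intro CollectI exI[of _ A] exI[of _ "\<lambda>a. r * c a"]) simp
qed

lemma fspan_mono: "S \<subseteq> T \<Longrightarrow> fspan S \<subseteq> fspan T"
  by (rule fspan_least[OF lclosed_fspan]) (auto intro: fspan_base)

lemma fspan_Un_decomp:
  assumes A: "lclosed A" and B: "lclosed B" and t: "t \<in> fspan (A \<union> B)"
  obtains a b where "a \<in> A" "b \<in> B" "t = (\<lambda>z. a z + b z)"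
proof -
  define V where "V = {t. \<exists>a\<in>A. \<exists>b\<in>B. t = (\<lambda>z. a z + b z)}"
  have "lclosed V" unfolding lclosed_def
  proof (intro conjI ballI allI)
    show "(\<lambda>_. 0) \<in> V"
      unfolding V_def using lclosed_zero[OF A] lclosed_zero[OF B]
      by (intro CollectI bexI[of _ "\<lambda>_. 0"]) simp_all
  next
    fix u v assume "u \<in> V" "v \<in> V"
    then obtain a b a' b' where ab: "a \<in> A" "b \<in> B" "u = (\<lambda>z. a z + b z)"
      and ab': "a' \<in> A" "b' \<in> B" "v = (\<lambda>z. a' z + b' z)"
      unfolding V_def by blast
    show "(\<lambda>x. u x + v x) \<in> V" unfolding V_def
      by (intro CollectI bexI[of _ "\<lambda>z. a z + a' z"] bexI[of _ "\<lambda>z. b z + b' z"]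
          lclosed_add[OF A] lclosed_add[OF B] ab ab') (simp add: ab ab' ac_simps)
  next
    fix r v assume "v \<in> V"
    then obtain a b where ab: "a \<in> A" "b \<in> B" "v = (\<lambda>z. a z + b z)"
      unfolding V_def by blast
    show "(\<lambda>x. r * v x) \<in> V" unfolding V_def
      by (intro CollectI bexI[of _ "\<lambda>z. r * a z"] bexI[of _ "\<lambda>z. r * b z"]
          lclosed_scale[OF A] lclosed_scale[OF B] ab) (simp add: ab distrib_left)
  qed
  moreover have "A \<union> B \<subseteq> V"
  proof
    fix t assume "t \<in> A \<union> B"
    then show "t \<in> V"
    proof
      assume "t \<in> A"
      then show "t \<in> V" unfolding V_def using lclosed_zero[OF B]
        by (intro CollectI bexI[of _ t] bexI[of _ "\<lambda>_. 0"]) simp_all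
    next
      assume "t \<in> B"
      then show "t \<in> V" unfolding V_def using lclosed_zero[OF A]
        by (intro CollectI bexI[of _ "\<lambda>_. 0"] bexI[of _ t]) simp_all
    qed
  qed
  ultimately have "t \<in> V" using fspan_least t by blast
  then show ?thesis using that unfolding V_def by blast
qed

lemma fspan_Un_compose: "a \<in> A \<Longrightarrow> b \<in> B \<Longrightarrow> (\<lambda>z. a z + b z) \<in> fspan (A \<union> B)"
  by (rule lclosed_add[OF lclosed_fspan]) (auto intro: fspan_base)

section \<open>Tensors and their slices\<close>

text \<open>A tensor t \<in> C \<otimes> C is a finitely supported function on pairs of basis indices; its
  rows are the vectors y \<mapsto> t (x, y) and its columns the vectors x \<mapsto> t (x, y).\<close>

lemma tprod_app [simp]: "tprod u v (x, y) = u x * v y"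
  unfolding tprod_def by simp

lemma row_Cspace: "t \<in> Cspace \<Longrightarrow> (\<lambda>y. t (x, y)) \<in> Cspace"
  unfolding Cspace_iff by (rule finite_subset[of _ "snd ` {p. t p \<noteq> 0}"]) force+

lemma col_Cspace: "t \<in> Cspace \<Longrightarrow> (\<lambda>x. t (x, y)) \<in> Cspace"
  unfolding Cspace_iff by (rule finite_subset[of _ "fst ` {p. t p \<noteq> 0}"]) force+

lemma tprod_Cspace: "u \<in> Cspace \<Longrightarrow> v \<in> Cspace \<Longrightarrow> tprod u v \<in> Cspace"
  unfolding Cspace_iff
  by (rule finite_subset[of _ "{x. u x \<noteq> 0} \<times> {x. v x \<noteq> 0}"]) auto

lemma lclosed_tens: "lclosed (tens D E)"
  unfolding tens_def by (rule lclosed_fspan)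

lemma tprod_tens: "d \<in> D \<Longrightarrow> e \<in> E \<Longrightarrow> tprod d e \<in> tens D E"
  unfolding tens_def by (rule fspan_base) blast

lemma tens_mono: "D \<subseteq> D' \<Longrightarrow> E \<subseteq> E' \<Longrightarrow> tens D E \<subseteq> tens D' E'"
  unfolding tens_def by (rule fspan_mono) blast

lemma tens_Cspace: "D \<subseteq> Cspace \<Longrightarrow> E \<subseteq> Cspace \<Longrightarrow> tens D E \<subseteq> Cspace"
  unfolding tens_def by (rule fspan_least[OF lclosed_Cspace]) (auto intro: tprod_Cspace)

lemma tens_slices:
  assumes X: "lclosed X" and Y: "lclosed Y" and t: "t \<in> tens X Y"
  shows "(\<lambda>y. t (x, y)) \<in> Y" and "(\<lambda>x. t (x, y)) \<in> X"
proof -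
  define V where "V = {t. (\<forall>x. (\<lambda>y. t (x, y)) \<in> Y) \<and> (\<forall>y. (\<lambda>x. t (x, y)) \<in> X)}"
  have "lclosed V"
    unfolding lclosed_def V_def
    using lclosed_zero[OF X] lclosed_zero[OF Y] lclosed_add[OF X] lclosed_add[OF Y]
      lclosed_scale[OF X] lclosed_scale[OF Y]
    by simp
  moreover have "{tprod d e | d e. d \<in> X \<and> e \<in> Y} \<subseteq> V"
  proof clarify
    fix d e assume "d \<in> X" "e \<in> Y"
    then have "(\<lambda>y. d x * e y) \<in> Y" "(\<lambda>x. e y * d x) \<in> X" for x y
      using lclosed_scale[OF Y] lclosed_scale[OF X] by blast+
    then show "tprod d e \<in> V" unfolding V_def by (simp add: mult.commute)
  qed
  ultimately have "t \<in> V" using t fspan_least unfolding tens_def by blast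
  then show "(\<lambda>y. t (x, y)) \<in> Y" "(\<lambda>x. t (x, y)) \<in> X" unfolding V_def by simp_all
qed

definition tswap :: "('a \<times> 'a \<Rightarrow> 'k) \<Rightarrow> 'a \<times> 'a \<Rightarrow> 'k" where
  "tswap t = (\<lambda>(x, y). t (y, x))"

lemma tswap_app [simp]: "tswap t (x, y) = t (y, x)"
  and tswap_tswap [simp]: "tswap (tswap t) = t"
  unfolding tswap_def by auto

lemma tswap_Cspace: "t \<in> Cspace \<Longrightarrow> tswap t \<in> Cspace"
  unfolding Cspace_iff
  by (rule finite_subset[of _ "prod.swap ` {p. t p \<noteq> 0}"]) (auto simp: tswap_def image_iff)

lemma lclosed_tswap_preimage: "lclosed V \<Longrightarrow> lclosed {t. tswap t \<in> V}"
  unfolding lclosed_def tswap_def by (simp add: case_prod_unfold)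

lemma tswap_tens: "t \<in> tens D E \<Longrightarrow> tswap t \<in> tens E D"
proof -
  have "{tprod d e | d e. d \<in> D \<and> e \<in> E} \<subseteq> {t. tswap t \<in> tens E D}"
  proof clarify
    fix d e assume "d \<in> D" "e \<in> E"
    moreover have "tswap (tprod d e) = tprod e d"
      by (auto simp: tswap_def fun_eq_iff mult.commute)
    ultimately show "tswap (tprod d e) \<in> tens E D" by (simp add: tprod_tens)
  qed
  then have "tens D E \<subseteq> {t. tswap t \<in> tens E D}"
    unfolding tens_def[of D E] by (rule fspan_least[OF lclosed_tswap_preimage[OF lclosed_tens]])
  then show "t \<in> tens D E \<Longrightarrow> tswap t \<in> tens E D" by blast
qed

lemma tswap_fspan_tens:
  assumes "t \<in> fspan (tens A B \<union> tens A' B')"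
  shows "tswap t \<in> fspan (tens B A \<union> tens B' A')"
proof -
  have "tens A B \<union> tens A' B' \<subseteq> {t. tswap t \<in> fspan (tens B A \<union> tens B' A')}"
    by (auto intro: fspan_base tswap_tens)
  then have "fspan (tens A B \<union> tens A' B') \<subseteq> {t. tswap t \<in> fspan (tens B A \<union> tens B' A')}"
    by (rule fspan_least[OF lclosed_tswap_preimage[OF lclosed_fspan]])
  then show ?thesis using assms by blast
qed

definition ind :: "'a \<Rightarrow> 'a \<Rightarrow> 'k::field" where
  "ind x = (\<lambda>z. if z = x then 1 else 0)"

lemma ind_Cspace: "ind x \<in> Cspace"
  unfolding Cspace_iff ind_def by (rule finite_subset[of _ "{x}"]) auto

lemma rows_tens:
  assumes t: "t \<in> Cspace" and rows: "\<And>x. (\<lambda>y. t (x, y)) \<in> Y"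
  shows "t \<in> tens Cspace Y"
proof -
  define F where "F = fst ` {p. t p \<noteq> 0}"
  have fin: "finite F" using t unfolding F_def Cspace_iff by simp
  have "t = (\<lambda>p. \<Sum>x\<in>F. 1 * tprod (ind x) (\<lambda>y. t (x, y)) p)"
  proof
    fix p :: "'a \<times> 'a"
    obtain a b where p: "p = (a, b)" by force
    have "(\<Sum>x\<in>F. 1 * tprod (ind x) (\<lambda>y. t (x, y)) p) = (\<Sum>x\<in>F. if a = x then t (x, b) else 0)"
      unfolding p by (rule sum.cong) (auto simp: ind_def)
    also have "\<dots> = t p" using fin unfolding p F_def by (auto simp: image_iff)
    finally show "t p = (\<Sum>x\<in>F. 1 * tprod (ind x) (\<lambda>y. t (x, y)) p)" by simp
  qed
  also have "\<dots> \<in> tens Cspace Y"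
    by (rule lclosed_sum[OF lclosed_tens fin]) (intro tprod_tens ind_Cspace rows)
  finally show ?thesis .
qed

lemma cols_tens:
  assumes t: "t \<in> Cspace" and cols: "\<And>y. (\<lambda>x. t (x, y)) \<in> X"
  shows "t \<in> tens X Cspace"
proof -
  have "tswap t \<in> tens Cspace X"
    by (rule rows_tens[OF tswap_Cspace[OF t]]) (simp add: cols)
  then show ?thesis using tswap_tens by fastforce
qed

lemma rank_one_elimination:
  assumes a: "t (x0, y0) \<noteq> 0"
  defines "t' \<equiv> \<lambda>p. t p - inverse (t (x0, y0)) * tprod (\<lambda>x. t (x, y0)) (\<lambda>y. t (x0, y)) p"
  shows "{x. \<exists>y. t' (x, y) \<noteq> 0} \<subset> {x. \<exists>y. t (x, y) \<noteq> 0}"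
proof
  show "{x. \<exists>y. t' (x, y) \<noteq> 0} \<subseteq> {x. \<exists>y. t (x, y) \<noteq> 0}"
  proof clarify
    fix x y assume "t' (x, y) \<noteq> 0"
    then have "t (x, y) \<noteq> 0 \<or> t (x, y0) \<noteq> 0" unfolding t'_def by auto
    then show "\<exists>y. t (x, y) \<noteq> 0" by blast
  qed
  have "t' (x0, y) = 0" for y
    unfolding t'_def using a by simp
  then show "{x. \<exists>y. t' (x, y) \<noteq> 0} \<noteq> {x. \<exists>y. t (x, y) \<noteq> 0}"
    using a by blast
qed

lemma rows_cols_tens:
  assumes X: "lclosed X" and Y: "lclosed Y"
    and "t \<in> Cspace" "\<And>x. (\<lambda>y. t (x, y)) \<in> Y" "\<And>y. (\<lambda>x. t (x, y)) \<in> X"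
  shows "t \<in> tens X Y"
  using assms(3-5)
proof (induction "card {x. \<exists>y. t (x, y) \<noteq> 0}" arbitrary: t rule: less_induct)
  case less
  show ?case
  proof (cases "\<exists>x0 y0. t (x0, y0) \<noteq> 0")
    case False
    then have "t = (\<lambda>_. 0)" by fastforce
    then show ?thesis using lclosed_zero[OF lclosed_tens] by simp
  next
    case True
    then obtain x0 y0 where a: "t (x0, y0) \<noteq> 0" by blast
    define c where "c = (\<lambda>x. t (x, y0))"
    define r where "r = (\<lambda>y. t (x0, y))"
    define s where "s = (\<lambda>p. inverse (t (x0, y0)) * tprod c r p)"
    define t' where "t' = (\<lambda>p. t p - s p)"
    have cX: "c \<in> X" and rY: "r \<in> Y" unfolding c_def r_def using less.prems by simp_all
    have s: "s \<in> tens X Y" unfolding s_def by (rule lclosed_scale[OF lclosed_tens tprod_tens[OF cX rY]])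
    have "s \<in> Cspace" unfolding s_def
      by (intro lclosed_scale[OF lclosed_Cspace] tprod_Cspace)
        (simp_all add: c_def r_def col_Cspace row_Cspace less.prems)
    then have t'C: "t' \<in> Cspace" unfolding t'_def by (rule lclosed_diff[OF lclosed_Cspace less.prems(1)])
    have "(\<lambda>y. t' (x, y)) = (\<lambda>y. t (x, y) - (inverse (t (x0, y0)) * c x) * r y)" for x
      by (simp add: t'_def s_def mult.assoc)
    then have rows': "(\<lambda>y. t' (x, y)) \<in> Y" for x
      using lclosed_diff[OF Y less.prems(2) lclosed_scale[OF Y rY]] by simp
    have "(\<lambda>x. t' (x, y)) = (\<lambda>x. t (x, y) - (inverse (t (x0, y0)) * r y) * c x)" for y
      by (simp add: t'_def s_def ac_simps)
    then have cols': "(\<lambda>x. t' (x, y)) \<in> X" for y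
      using lclosed_diff[OF X less.prems(3) lclosed_scale[OF X cX]] by simp
    have "finite {x. \<exists>y. t (x, y) \<noteq> 0}"
      using less.prems(1) unfolding Cspace_iff
      by (rule finite_subset[rotated, OF finite_imageI[of _ fst]]) force
    moreover have "{x. \<exists>y. t' (x, y) \<noteq> 0} \<subset> {x. \<exists>y. t (x, y) \<noteq> 0}"
      using rank_one_elimination[of t x0 y0, OF a] unfolding t'_def s_def c_def r_def .
    ultimately have "t' \<in> tens X Y"
      by (intro less.hyps[OF psubset_card_mono] t'C rows' cols')
    then have "(\<lambda>p. t' p + s p) \<in> tens X Y" by (rule lclosed_add[OF lclosed_tens _ s])
    then show ?thesis by (simp add: t'_def)
  qed
qed

section \<open>The linear extension of the comultiplication\<close>

lemma finite_supp_mult: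
  fixes f g :: "'a \<Rightarrow> 'k::field"
  assumes "finite {z. f z \<noteq> 0}"
  shows "finite {z. g z * f z \<noteq> 0}" and "finite {z. f z * g z \<noteq> 0}"
  by (rule finite_subset[OF _ assms], auto)+

lemma Delta_expand:
  assumes "finite A" and "{b. v b \<noteq> 0} \<subseteq> A"
  shows "Delta \<delta> v p = (\<Sum>b\<in>A. v b * \<delta> b p)"
  unfolding Delta_def by (rule Sum_any.expand_superset) (use assms in auto)

lemma Delta_Cspace:
  assumes fin: "\<And>b. \<delta> b \<in> Cspace" and v: "v \<in> Cspace"
  shows "Delta \<delta> v \<in> Cspace"
proof -
  have "Delta \<delta> v = (\<lambda>p. \<Sum>b\<in>{b. v b \<noteq> 0}. v b * \<delta> b p)"
    using v by (intro ext Delta_expand) (auto simp: Cspace_iff)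
  also have "\<dots> \<in> Cspace"
    using v by (intro lclosed_sum[OF lclosed_Cspace] fin) (simp add: Cspace_iff)
  finally show ?thesis .
qed

lemma Delta_add:
  assumes u: "u \<in> Cspace" and v: "v \<in> Cspace"
  shows "Delta \<delta> (\<lambda>x. u x + v x) = (\<lambda>p. Delta \<delta> u p + Delta \<delta> v p)"
proof
  fix p
  let ?A = "{b. u b \<noteq> 0} \<union> {b. v b \<noteq> 0}"
  have fA: "finite ?A" using u v by (simp add: Cspace_iff)
  have "Delta \<delta> (\<lambda>x. u x + v x) p = (\<Sum>b\<in>?A. (u b + v b) * \<delta> b p)"
    by (rule Delta_expand[OF fA]) auto
  also have "\<dots> = (\<Sum>b\<in>?A. u b * \<delta> b p) + (\<Sum>b\<in>?A. v b * \<delta> b p)"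
    by (simp add: distrib_right sum.distrib)
  also have "\<dots> = Delta \<delta> u p + Delta \<delta> v p"
    using Delta_expand[OF fA, of u] Delta_expand[OF fA, of v] by auto
  finally show "Delta \<delta> (\<lambda>x. u x + v x) p = Delta \<delta> u p + Delta \<delta> v p" .
qed

lemma Delta_scale:
  assumes "v \<in> Cspace"
  shows "Delta \<delta> (\<lambda>x. a * v x) = (\<lambda>p. a * Delta \<delta> v p)"
  using assms unfolding Delta_def Cspace_iff
  by (simp add: Sum_any_right_distrib finite_supp_mult mult.assoc)

lemma lclosed_Delta_preimage:
  assumes "lclosed V"
  shows "lclosed {v \<in> Cspace. Delta \<delta> v \<in> V}"
  unfolding lclosed_def
proof (intro conjI ballI allI)
  show "(\<lambda>_. 0) \<in> {v \<in> Cspace. Delta \<delta> v \<in> V}"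
    using lclosed_zero[OF assms] lclosed_zero[OF lclosed_Cspace] by (simp add: Delta_def)
next
  fix u v assume "u \<in> {v \<in> Cspace. Delta \<delta> v \<in> V}" "v \<in> {v \<in> Cspace. Delta \<delta> v \<in> V}"
  then have "u \<in> Cspace" "v \<in> Cspace" "Delta \<delta> u \<in> V" "Delta \<delta> v \<in> V" by simp_all
  then show "(\<lambda>x. u x + v x) \<in> {v \<in> Cspace. Delta \<delta> v \<in> V}"
    using lclosed_add[OF assms] lclosed_add[OF lclosed_Cspace] by (simp add: Delta_add)
next
  fix a v assume "v \<in> {v \<in> Cspace. Delta \<delta> v \<in> V}"
  then have "v \<in> Cspace" "Delta \<delta> v \<in> V" by simp_all
  then show "(\<lambda>x. a * v x) \<in> {v \<in> Cspace. Delta \<delta> v \<in> V}"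
    using lclosed_scale[OF assms] lclosed_scale[OF lclosed_Cspace] by (simp add: Delta_scale)
qed

lemma coalgebra_fin: "coalgebra \<delta> \<epsilon> \<Longrightarrow> \<delta> b \<in> Cspace"
  unfolding coalgebra_def Cspace_def by simp

lemma coalgebra_coassoc:
  "coalgebra \<delta> \<epsilon> \<Longrightarrow> (\<Sum>z. \<delta> c (z, w) * \<delta> z (x, u)) = (\<Sum>y. \<delta> c (x, y) * \<delta> y (u, w))"
  unfolding coalgebra_def by blast

lemma Sum_any_sum:
  fixes f :: "'c \<Rightarrow> 'a \<Rightarrow> 'k::comm_monoid_add"
  assumes "finite S" and "\<And>c. c \<in> S \<Longrightarrow> finite {a. f c a \<noteq> 0}"
  shows "(\<Sum>a. \<Sum>c\<in>S. f c a) = (\<Sum>c\<in>S. \<Sum>a. f c a)"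
  using assms
proof (induction S rule: finite_induct)
  case empty
  then show ?case by simp
next
  case (insert c S)
  have "{a. (\<Sum>c\<in>S. f c a) \<noteq> 0} \<subseteq> (\<Union>c\<in>S. {a. f c a \<noteq> 0})"
    by (auto elim: sum.not_neutral_contains_not_neutral)
  then have "finite {a. (\<Sum>c\<in>S. f c a) \<noteq> 0}"
    by (rule finite_subset) (use insert in auto)
  then show ?case using insert by (simp add: Sum_any.distrib)
qed

text \<open>The operator lcoact \<delta> x applies the comultiplication to the
  first tensor factor and keeps the x-row of the result; coassociativity says that the
  coproduct of the x-row of Delta v is lcoact \<delta> x (Delta v).\<close>

definition lcoact :: "('b \<Rightarrow> 'b \<times> 'b \<Rightarrow> 'k::field) \<Rightarrow> 'b \<Rightarrow> ('b \<times> 'b \<Rightarrow> 'k) \<Rightarrow> 'b \<times> 'b \<Rightarrow> 'k" where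
  "lcoact \<delta> x t = (\<lambda>(u, w). \<Sum>z. \<delta> z (x, u) * t (z, w))"

lemma coassoc_row:
  assumes co: "coalgebra \<delta> \<epsilon>" and v: "v \<in> Cspace"
  shows "Delta \<delta> (\<lambda>y. Delta \<delta> v (x, y)) = lcoact \<delta> x (Delta \<delta> v)"
proof (rule ext, clarify)
  fix u w
  let ?S = "{c. v c \<noteq> 0}"
  have fS: "finite ?S" using v by (simp add: Cspace_iff)
  have Dv: "Delta \<delta> v p = (\<Sum>c\<in>?S. v c * \<delta> c p)" for p
    by (rule Delta_expand[OF fS]) simp
  have row: "finite {b. \<delta> c (x, b) \<noteq> 0}" and col: "finite {z. \<delta> c (z, w) \<noteq> 0}" for c
    using row_Cspace[OF coalgebra_fin[OF co]] col_Cspace[OF coalgebra_fin[OF co]]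
    by (simp_all add: Cspace_iff)
  have "Delta \<delta> (\<lambda>y. Delta \<delta> v (x, y)) (u, w) = (\<Sum>b. Delta \<delta> v (x, b) * \<delta> b (u, w))"
    by (simp add: Delta_def)
  also have "\<dots> = (\<Sum>b. \<Sum>c\<in>?S. v c * (\<delta> c (x, b) * \<delta> b (u, w)))"
    by (simp add: Dv sum_distrib_right mult.assoc)
  also have "\<dots> = (\<Sum>c\<in>?S. \<Sum>b. v c * (\<delta> c (x, b) * \<delta> b (u, w)))"
    by (rule Sum_any_sum[OF fS]) (intro finite_supp_mult row)
  also have "\<dots> = (\<Sum>c\<in>?S. v c * (\<Sum>b. \<delta> c (x, b) * \<delta> b (u, w)))"
    by (simp add: Sum_any_right_distrib finite_supp_mult row)
  also have "\<dots> = (\<Sum>c\<in>?S. v c * (\<Sum>z. \<delta> c (z, w) * \<delta> z (x, u)))"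
    by (simp add: coalgebra_coassoc[OF co])
  also have "\<dots> = (\<Sum>c\<in>?S. \<Sum>z. \<delta> z (x, u) * (v c * \<delta> c (z, w)))"
    by (simp add: Sum_any_right_distrib finite_supp_mult col ac_simps)
  also have "\<dots> = (\<Sum>z. \<Sum>c\<in>?S. \<delta> z (x, u) * (v c * \<delta> c (z, w)))"
    by (rule Sum_any_sum[OF fS, symmetric]) (intro finite_supp_mult col)
  also have "\<dots> = lcoact \<delta> x (Delta \<delta> v) (u, w)"
    by (simp add: lcoact_def Dv sum_distrib_left)
  finally show "Delta \<delta> (\<lambda>y. Delta \<delta> v (x, y)) (u, w) = lcoact \<delta> x (Delta \<delta> v) (u, w)" .
qed

lemma lcoact_Cspace:
  assumes fin: "\<And>z. \<delta> z \<in> Cspace" and t: "t \<in> Cspace"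
  shows "lcoact \<delta> x t \<in> Cspace"
proof -
  let ?T = "{p. t p \<noteq> 0}"
  let ?U = "\<Union>z\<in>fst ` ?T. snd ` {p. \<delta> z p \<noteq> 0}"
  have "{p. lcoact \<delta> x t p \<noteq> 0} \<subseteq> ?U \<times> snd ` ?T"
  proof clarify
    fix u w assume "lcoact \<delta> x t (u, w) \<noteq> 0"
    then obtain z where "\<delta> z (x, u) * t (z, w) \<noteq> 0"
      unfolding lcoact_def by (auto elim: Sum_any.not_neutral_obtains_not_neutral)
    then show "u \<in> ?U \<and> w \<in> snd ` ?T" by force
  qed
  moreover have "finite (?U \<times> snd ` ?T)"
    using t fin by (simp add: Cspace_iff)
  ultimately show ?thesis unfolding Cspace_iff by (rule finite_subset)
qed

lemma lcoact_add:
  assumes p: "p \<in> Cspace" and q: "q \<in> Cspace"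
  shows "lcoact \<delta> x (\<lambda>r. p r + q r) = (\<lambda>r. lcoact \<delta> x p r + lcoact \<delta> x q r)"
proof (rule ext, clarify)
  fix u w
  have "finite {z. \<delta> z (x, u) * p (z, w) \<noteq> 0}" "finite {z. \<delta> z (x, u) * q (z, w) \<noteq> 0}"
    using col_Cspace[OF p] col_Cspace[OF q] by (simp_all add: Cspace_iff finite_supp_mult)
  then show "lcoact \<delta> x (\<lambda>r. p r + q r) (u, w) = lcoact \<delta> x p (u, w) + lcoact \<delta> x q (u, w)"
    by (simp add: lcoact_def distrib_left Sum_any.distrib)
qed

text \<open>lcoact \<delta> x preserves D \<otimes> C when D is a subcoalgebra (it acts on the first factor),
  and preserves C \<otimes> E for every subspace E (it recombines rows).\<close>

lemma lcoact_left:
  assumes fin: "\<And>z. \<delta> z \<in> Cspace" and D: "subcoalgebra \<delta> D" and p: "p \<in> tens D Cspace"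
  shows "lcoact \<delta> x p \<in> tens D Cspace"
proof (rule cols_tens)
  have DC: "D \<subseteq> Cspace" and lD: "lclosed D"
    using D unfolding subcoalgebra_def fsubspace_iff by simp_all
  have pC: "p \<in> Cspace" using tens_Cspace[OF DC subset_refl] p by blast
  then show "lcoact \<delta> x p \<in> Cspace" by (rule lcoact_Cspace[OF fin])
  fix w
  have "(\<lambda>z. p (z, w)) \<in> D" by (rule tens_slices(2)[OF lD lclosed_Cspace p])
  then have "Delta \<delta> (\<lambda>z. p (z, w)) \<in> tens D D" using D unfolding subcoalgebra_def by blast
  then have "(\<lambda>u. Delta \<delta> (\<lambda>z. p (z, w)) (x, u)) \<in> D" by (rule tens_slices(1)[OF lD lD])
  moreover have "(\<lambda>u. lcoact \<delta> x p (u, w)) = (\<lambda>u. Delta \<delta> (\<lambda>z. p (z, w)) (x, u))"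
    unfolding lcoact_def Delta_def by (simp add: mult.commute)
  ultimately show "(\<lambda>u. lcoact \<delta> x p (u, w)) \<in> D" by simp
qed

lemma lcoact_right:
  assumes fin: "\<And>z. \<delta> z \<in> Cspace" and E: "fsubspace E" and q: "q \<in> tens Cspace E"
  shows "lcoact \<delta> x q \<in> tens Cspace E"
proof (rule rows_tens)
  have EC: "E \<subseteq> Cspace" and lE: "lclosed E"
    using E unfolding fsubspace_iff by simp_all
  have qC: "q \<in> Cspace" using tens_Cspace[OF subset_refl EC] q by blast
  then show "lcoact \<delta> x q \<in> Cspace" by (rule lcoact_Cspace[OF fin])
  fix u
  let ?Z = "fst ` {p. q p \<noteq> 0}"
  have "finite ?Z" using qC by (simp add: Cspace_iff)
  then have "(\<lambda>w. lcoact \<delta> x q (u, w)) = (\<lambda>w. \<Sum>z\<in>?Z. \<delta> z (x, u) * q (z, w))"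
    unfolding lcoact_def prod.case by (intro ext Sum_any.expand_superset) force+
  also have "\<dots> \<in> E"
    by (rule lclosed_sum[OF lE \<open>finite ?Z\<close>]) (rule tens_slices(1)[OF lclosed_Cspace lE q])
  finally show "(\<lambda>w. lcoact \<delta> x q (u, w)) \<in> E" .
qed

section \<open>The opposite coalgebra\<close>

text \<open>Reversing the order of the tensor factors gives again a coalgebra; it exchanges rows
  with columns and D \<and> E with E \<and> D, so results about rows transfer to columns.\<close>

definition opp :: "('b \<Rightarrow> 'b \<times> 'b \<Rightarrow> 'k::field) \<Rightarrow> 'b \<Rightarrow> 'b \<times> 'b \<Rightarrow> 'k" where
  "opp \<delta> = (\<lambda>b. tswap (\<delta> b))"

lemma Delta_opp: "Delta (opp \<delta>) v = tswap (Delta \<delta> v)"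
  by (auto simp: Delta_def opp_def tswap_def fun_eq_iff)

lemma coalgebra_opp:
  assumes co: "coalgebra \<delta> \<epsilon>"
  shows "coalgebra (opp \<delta>) \<epsilon>"
  unfolding coalgebra_def
proof (intro conjI allI)
  fix b u v w
  show "fin_supp (opp \<delta> b)"
    using tswap_Cspace[OF coalgebra_fin[OF co]] unfolding opp_def Cspace_def by simp
  show "(\<Sum>x. opp \<delta> b (x, w) * opp \<delta> x (u, v)) = (\<Sum>y. opp \<delta> b (u, y) * opp \<delta> y (v, w))"
    using coalgebra_coassoc[OF co, of b u w v] unfolding opp_def by simp
  have "(\<Sum>y. \<delta> b (u, y) * \<epsilon> y) = (if u = b then 1 else 0)"
    "(\<Sum>x. \<epsilon> x * \<delta> b (x, u)) = (if u = b then 1 else 0)"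
    using co unfolding coalgebra_def by blast+
  then show "(\<Sum>x. \<epsilon> x * opp \<delta> b (x, u)) = (if u = b then 1 else 0)"
    and "(\<Sum>y. opp \<delta> b (u, y) * \<epsilon> y) = (if u = b then 1 else 0)"
    unfolding opp_def by (simp_all add: mult.commute)
qed

lemma subcoalgebra_opp: "subcoalgebra \<delta> D \<Longrightarrow> subcoalgebra (opp \<delta>) D"
  unfolding subcoalgebra_def Delta_opp by (auto intro: tswap_tens)

lemma wedge_opp: "wedge (opp \<delta>) E D = wedge \<delta> D E"
proof -
  have "tswap t \<in> fspan (tens E Cspace \<union> tens Cspace D) \<longleftrightarrow>
      t \<in> fspan (tens D Cspace \<union> tens Cspace E)" for t
  proof
    assume "tswap t \<in> fspan (tens E Cspace \<union> tens Cspace D)"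
    then have "tswap (tswap t) \<in> fspan (tens Cspace E \<union> tens D Cspace)"
      by (rule tswap_fspan_tens)
    then show "t \<in> fspan (tens D Cspace \<union> tens Cspace E)" by (simp add: Un_commute)
  next
    assume "t \<in> fspan (tens D Cspace \<union> tens Cspace E)"
    then have "tswap t \<in> fspan (tens Cspace D \<union> tens E Cspace)"
      by (rule tswap_fspan_tens)
    then show "tswap t \<in> fspan (tens E Cspace \<union> tens Cspace D)" by (simp add: Un_commute)
  qed
  then show ?thesis unfolding wedge_def Delta_opp by simp
qed

section \<open>The wedge of two subcoalgebras\<close>

lemma wedge_fsubspace: "fsubspace (wedge \<delta> D E)"
proof -
  have "lclosed (wedge \<delta> D E)"
    unfolding wedge_def by (rule lclosed_Delta_preimage[OF lclosed_fspan])
  moreover have "wedge \<delta> D E \<subseteq> Cspace" unfolding wedge_def by (rule Collect_subset)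
  ultimately show ?thesis by (simp add: fsubspace_iff)
qed

lemma wedge_mono:
  assumes "D \<subseteq> D'" and "E \<subseteq> E'"
  shows "wedge \<delta> D E \<subseteq> wedge \<delta> D' E'"
proof -
  have "tens D Cspace \<union> tens Cspace E \<subseteq> tens D' Cspace \<union> tens Cspace E'"
    by (intro Un_mono tens_mono assms order_refl)
  then have "fspan (tens D Cspace \<union> tens Cspace E) \<subseteq> fspan (tens D' Cspace \<union> tens Cspace E')"
    by (rule fspan_mono)
  then show ?thesis unfolding wedge_def by blast
qed

lemma subcoalgebra_le_wedge:
  assumes D: "subcoalgebra \<delta> D" and "D \<subseteq> D'"
  shows "D \<subseteq> wedge \<delta> D' E"
proof
  fix v assume v: "v \<in> D"
  have DC: "D \<subseteq> Cspace" using D unfolding subcoalgebra_def fsubspace_iff by simp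
  have "Delta \<delta> v \<in> tens D D" using D v unfolding subcoalgebra_def by blast
  also have "\<dots> \<subseteq> tens D' Cspace" by (rule tens_mono[OF \<open>D \<subseteq> D'\<close> DC])
  finally have "Delta \<delta> v \<in> fspan (tens D' Cspace \<union> tens Cspace E)"
    by (intro fspan_base UnI1)
  then show "v \<in> wedge \<delta> D' E" unfolding wedge_def using v DC by blast
qed

lemma wedge_row:
  assumes co: "coalgebra \<delta> \<epsilon>" and D: "subcoalgebra \<delta> D" and E: "subcoalgebra \<delta> E"
    and v: "v \<in> wedge \<delta> D E"
  shows "(\<lambda>y. Delta \<delta> v (x, y)) \<in> wedge \<delta> D E"
proof -
  have fin: "\<And>z. \<delta> z \<in> Cspace" using coalgebra_fin[OF co] .
  have DC: "D \<subseteq> Cspace" and EC: "E \<subseteq> Cspace" and fE: "fsubspace E"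
    using D E unfolding subcoalgebra_def fsubspace_iff by simp_all
  have vC: "v \<in> Cspace" and Dv: "Delta \<delta> v \<in> fspan (tens D Cspace \<union> tens Cspace E)"
    using v unfolding wedge_def by simp_all
  obtain p q where p: "p \<in> tens D Cspace" and q: "q \<in> tens Cspace E"
    and pq: "Delta \<delta> v = (\<lambda>r. p r + q r)"
    by (rule fspan_Un_decomp[OF lclosed_tens lclosed_tens Dv])
  have pC: "p \<in> Cspace" and qC: "q \<in> Cspace"
    using p q tens_Cspace[OF DC subset_refl] tens_Cspace[OF subset_refl EC] by blast+
  have "Delta \<delta> (\<lambda>y. Delta \<delta> v (x, y)) = lcoact \<delta> x (Delta \<delta> v)"
    by (rule coassoc_row[OF co vC])
  also have "\<dots> = (\<lambda>r. lcoact \<delta> x p r + lcoact \<delta> x q r)"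
    unfolding pq by (rule lcoact_add[OF pC qC])
  also have "\<dots> \<in> fspan (tens D Cspace \<union> tens Cspace E)"
    by (rule fspan_Un_compose[OF lcoact_left[OF fin D p] lcoact_right[OF fin fE q]])
  finally show ?thesis
    unfolding wedge_def using row_Cspace[OF Delta_Cspace[OF fin vC]] by simp
qed

lemma wedge_col:
  assumes co: "coalgebra \<delta> \<epsilon>" and D: "subcoalgebra \<delta> D" and E: "subcoalgebra \<delta> E"
    and v: "v \<in> wedge \<delta> D E"
  shows "(\<lambda>x. Delta \<delta> v (x, y)) \<in> wedge \<delta> D E"
proof -
  have "v \<in> wedge (opp \<delta>) E D" using v by (simp add: wedge_opp)
  then have "(\<lambda>x. Delta (opp \<delta>) v (y, x)) \<in> wedge (opp \<delta>) E D"
    by (rule wedge_row[OF coalgebra_opp[OF co] subcoalgebra_opp[OF E] subcoalgebra_opp[OF D]])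
  then show ?thesis by (simp add: Delta_opp wedge_opp)
qed

text \<open>The wedge theorem: D \<and> E is a subcoalgebra if D and E are.  Its coproducts have all
  rows and all columns in D \<and> E, so the row/column criterion applies.\<close>

lemma wedge_subcoalgebra:
  assumes co: "coalgebra \<delta> \<epsilon>" and D: "subcoalgebra \<delta> D" and E: "subcoalgebra \<delta> E"
  shows "subcoalgebra \<delta> (wedge \<delta> D E)"
  unfolding subcoalgebra_def
proof (intro conjI ballI wedge_fsubspace)
  fix v assume v: "v \<in> wedge \<delta> D E"
  have "\<And>z. \<delta> z \<in> Cspace" by (rule coalgebra_fin[OF co])
  then have DvC: "Delta \<delta> v \<in> Cspace"
    using v Delta_Cspace unfolding wedge_def by blast
  have lW: "lclosed (wedge \<delta> D E)" using wedge_fsubspace unfolding fsubspace_iff by blast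
  show "Delta \<delta> v \<in> tens (wedge \<delta> D E) (wedge \<delta> D E)"
    by (rule rows_cols_tens[OF lW lW DvC wedge_row[OF co D E v] wedge_col[OF co D E v]])
qed

section \<open>The coradical filtration\<close>

lemma coradical_subcoalgebra: "subcoalgebra \<delta> (coradical \<delta>)"
proof -
  define S where "S = \<Union>{D. simple_subcoalgebra \<delta> D}"
  have SC: "S \<subseteq> Cspace"
    unfolding S_def simple_subcoalgebra_def subcoalgebra_def fsubspace_iff by blast
  have "S \<subseteq> {v \<in> Cspace. Delta \<delta> v \<in> tens (fspan S) (fspan S)}"
  proof
    fix s assume "s \<in> S"
    then obtain D where D: "simple_subcoalgebra \<delta> D" "s \<in> D" unfolding S_def by blast
    then have "Delta \<delta> s \<in> tens D D"
      unfolding simple_subcoalgebra_def subcoalgebra_def by blast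
    have "D \<subseteq> S" using D(1) unfolding S_def by blast
    then have DS: "D \<subseteq> fspan S" using fspan_base by blast
    have "tens D D \<subseteq> tens (fspan S) (fspan S)" by (rule tens_mono[OF DS DS])
    with \<open>Delta \<delta> s \<in> tens D D\<close> show "s \<in> {v \<in> Cspace. Delta \<delta> v \<in> tens (fspan S) (fspan S)}"
      using \<open>s \<in> S\<close> SC by blast
  qed
  then have "fspan S \<subseteq> {v \<in> Cspace. Delta \<delta> v \<in> tens (fspan S) (fspan S)}"
    by (rule fspan_least[OF lclosed_Delta_preimage[OF lclosed_tens]])
  then show ?thesis
    unfolding subcoalgebra_def fsubspace_iff coradical_def S_def[symmetric]
    using lclosed_fspan by blast
qed

lemma coradical_le_filt: "coradical \<delta> \<subseteq> corad_filt \<delta> m"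
proof (induction m)
  case 0
  then show ?case by simp
next
  case (Suc m)
  then show ?case
    using subcoalgebra_le_wedge[OF coradical_subcoalgebra Suc.IH] by simp
qed

lemma filt_subcoalgebra:
  assumes co: "coalgebra \<delta> \<epsilon>"
  shows "subcoalgebra \<delta> (corad_filt \<delta> m)"
proof (induction m)
  case 0
  then show ?case by (simp add: coradical_subcoalgebra)
next
  case (Suc m)
  then show ?case using wedge_subcoalgebra[OF co Suc.IH coradical_subcoalgebra] by simp
qed

text \<open>The key step: since C_0 \<subseteq> C_m, C_{m+1} = C_m \<and> C_0 \<subseteq> C_m \<and> C_m; so if C_{m+1} = C then
  C_m \<and> C_m = C, and semiprimeness gives C_m = C.\<close>

lemma semiprime_filt_step:
  assumes co: "coalgebra \<delta> \<epsilon>" and sp: "semiprime \<delta>"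
    and top: "corad_filt \<delta> (Suc m) = Cspace"
  shows "corad_filt \<delta> m = Cspace"
proof -
  let ?D = "corad_filt \<delta> m"
  have "Cspace = wedge \<delta> ?D (coradical \<delta>)" using top by simp
  also have "\<dots> \<subseteq> wedge \<delta> ?D ?D" by (rule wedge_mono[OF order_refl coradical_le_filt])
  finally have "Cspace \<subseteq> wedge \<delta> ?D ?D" .
  moreover have "wedge \<delta> ?D ?D \<subseteq> Cspace" unfolding wedge_def by (rule Collect_subset)
  ultimately have "wedge \<delta> ?D ?D = Cspace" by (rule antisym[rotated])
  moreover have "subcoalgebra \<delta> ?D" by (rule filt_subcoalgebra[OF co])
  ultimately show ?thesis using sp unfolding semiprime_def by blast
qed

theorem mainTheorem12:
  fixes \<delta> :: "'b \<Rightarrow> 'b \<times> 'b \<Rightarrow> 'k::field" and \<epsilon> :: "'b \<Rightarrow> 'k"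
  assumes "coalgebra \<delta> \<epsilon>"
    and "semiprime \<delta>"
    and "\<exists>n. corad_filt \<delta> n = Cspace"
  shows "cosemisimple \<delta>"
proof -
  obtain n where "corad_filt \<delta> n = Cspace" using assms(3) by blast
  then have "corad_filt \<delta> 0 = Cspace"
  proof (induction n)
    case 0
    then show ?case .
  next
    case (Suc n)
    from semiprime_filt_step[OF assms(1,2) Suc.prems] show ?case by (rule Suc.IH)
  qed
  then show ?thesis unfolding cosemisimple_def by simp
qed

end
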